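(* Let $p>0$ be a prime and let $(R,\mathfrak{m},K)$ be a standard graded $K$-algebra over a field $K$ of characteristic $p$, which is $F$-finite and $F$-pure, and let $J\subseteq R$ be a homogeneous ideal. Then $p\cdot b_J(p^e)\leq b_J(p^{e+1})$ for every $e$.
   Context: A standard graded $K$-algebra: $R=\bigoplus_{i\geq0}R_i$ Noetherian, $R_0=K$, $R=K[R_1]$, $\dim_KR_1<\infty$, $\mathfrak{m}=\bigoplus_{i\geq1}R_i$. $F$-finite: $[K:K^p]<\infty$; $F$-pure: Frobenius pure (equivalently $R\to R^{1/p}$ splits). $I_e(R)=\{r\in R:\varphi(r^{1/p^e})\in\mathfrak{m}\text{ for all }\varphi\in\operatorname{Hom}_R(R^{1/p^e},R)\}$, and $b_J(p^e)=\max\{r: J^r\not\subseteq I_e(R)\}$. *)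

theory Defs
  imports Main "HOL-Computational_Algebra.Primes" "HOL-Library.Extended_Nat"
begin

(* Ideals of a commutative ring, in the type-class idiom: the ring is the whole type 'a. *)
definition is_ideal :: "'a::comm_ring_1 set \<Rightarrow> bool" where
  "is_ideal I \<longleftrightarrow> 0 \<in> I \<and> (\<forall>x\<in>I. \<forall>y\<in>I. x + y \<in> I) \<and> (\<forall>r. \<forall>x\<in>I. r * x \<in> I)"

definition ideal_gen :: "'a::comm_ring_1 set \<Rightarrow> 'a set" where
  "ideal_gen S = {x. \<exists>F c. finite F \<and> F \<subseteq> S \<and> x = (\<Sum>s\<in>F. c s * s)}"

definition ideal_pow :: "'a::comm_ring_1 set \<Rightarrow> nat \<Rightarrow> 'a set" where
  "ideal_pow J r = ideal_gen {(\<Prod>i<r. f i) | f. \<forall>i<r. f i \<in> J}"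

definition noetherian_ring :: "'a::comm_ring_1 itself \<Rightarrow> bool" where
  "noetherian_ring _ \<longleftrightarrow> (\<forall>I::'a set. is_ideal I \<longrightarrow> (\<exists>F. finite F \<and> F \<subseteq> I \<and> I = ideal_gen F))"

inductive_set subring_gen :: "'a::comm_ring_1 set \<Rightarrow> 'a set" for S where
  base: "x \<in> S \<Longrightarrow> x \<in> subring_gen S"
| one: "1 \<in> subring_gen S"
| add: "x \<in> subring_gen S \<Longrightarrow> y \<in> subring_gen S \<Longrightarrow> x + y \<in> subring_gen S"
| neg: "x \<in> subring_gen S \<Longrightarrow> - x \<in> subring_gen S"
| mult: "x \<in> subring_gen S \<Longrightarrow> y \<in> subring_gen S \<Longrightarrow> x * y \<in> subring_gen S"

(* Rg i is the degree-i piece R_i.  R = \<Oplus>_{i\<ge>0} R_i as a graded ring. *)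
definition graded_ring :: "(nat \<Rightarrow> 'a::comm_ring_1 set) \<Rightarrow> bool" where
  "graded_ring Rg \<longleftrightarrow>
     (\<forall>i. 0 \<in> Rg i \<and> (\<forall>x\<in>Rg i. \<forall>y\<in>Rg i. x + y \<in> Rg i) \<and> (\<forall>x\<in>Rg i. - x \<in> Rg i)) \<and>
     (\<forall>i j. \<forall>x\<in>Rg i. \<forall>y\<in>Rg j. x * y \<in> Rg (i + j)) \<and>
     1 \<in> Rg 0 \<and>
     (\<forall>x. \<exists>!c::nat \<Rightarrow> 'a. (\<forall>i. c i \<in> Rg i) \<and> finite {i. c i \<noteq> 0} \<and>
            x = (\<Sum>i\<in>{i. c i \<noteq> 0}. c i))"

definition hcomp :: "(nat \<Rightarrow> 'a::comm_ring_1 set) \<Rightarrow> nat \<Rightarrow> 'a \<Rightarrow> 'a" where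
  "hcomp Rg i x = (THE c::nat \<Rightarrow> 'a. (\<forall>i. c i \<in> Rg i) \<and> finite {i. c i \<noteq> 0} \<and>
            x = (\<Sum>i\<in>{i. c i \<noteq> 0}. c i)) i"

(* standard graded K-algebra: R_0 = K a field, R = K[R_1], dim_K R_1 finite, R Noetherian *)
definition standard_graded :: "(nat \<Rightarrow> 'a::comm_ring_1 set) \<Rightarrow> bool" where
  "standard_graded Rg \<longleftrightarrow> graded_ring Rg \<and>
     (0::'a) \<noteq> 1 \<and>
     (\<forall>x\<in>Rg 0. x \<noteq> 0 \<longrightarrow> (\<exists>y\<in>Rg 0. x * y = 1)) \<and>
     subring_gen (Rg 0 \<union> Rg 1) = UNIV \<and>
     (\<exists>B. finite B \<and> B \<subseteq> Rg 1 \<and>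
        (\<forall>x\<in>Rg 1. \<exists>c. (\<forall>b. c b \<in> Rg 0) \<and> x = (\<Sum>b\<in>B. c b * b))) \<and>
     noetherian_ring TYPE('a)"

(* the homogeneous maximal ideal m = \<Oplus>_{i\<ge>1} R_i *)
definition max_hom :: "(nat \<Rightarrow> 'a::comm_ring_1 set) \<Rightarrow> 'a set" where
  "max_hom Rg = {x. hcomp Rg 0 x = 0}"

definition homogeneous_ideal :: "(nat \<Rightarrow> 'a::comm_ring_1 set) \<Rightarrow> 'a set \<Rightarrow> bool" where
  "homogeneous_ideal Rg J \<longleftrightarrow> is_ideal J \<and> (\<forall>x\<in>J. \<forall>i. hcomp Rg i x \<in> J)"

(* Hom_R(R^{1/p^e}, R), with R^{1/p^e} identified with F^e_* R via r^{1/p^e} \<mapsto> r: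
   additive maps phi : R \<rightarrow> R with phi(a^{p^e} x) = a phi(x). *)
definition frob_hom :: "nat \<Rightarrow> nat \<Rightarrow> ('a::comm_ring_1 \<Rightarrow> 'a) \<Rightarrow> bool" where
  "frob_hom p e \<phi> \<longleftrightarrow> (\<forall>x y. \<phi> (x + y) = \<phi> x + \<phi> y) \<and>
                       (\<forall>a x. \<phi> (a ^ (p ^ e) * x) = a * \<phi> x)"

(* F-finite: [K : K^p] < \<infinity> *)
definition F_finite :: "nat \<Rightarrow> (nat \<Rightarrow> 'a::comm_ring_1 set) \<Rightarrow> bool" where
  "F_finite p Rg \<longleftrightarrow> (\<exists>B. finite B \<and> B \<subseteq> Rg 0 \<and>
      (\<forall>x\<in>Rg 0. \<exists>c. (\<forall>b. c b \<in> Rg 0) \<and> x = (\<Sum>b\<in>B. c b ^ p * b)))"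

(* F-pure, via the equivalent splitting of R \<rightarrow> R^{1/p} *)
definition F_pure :: "nat \<Rightarrow> 'a::comm_ring_1 itself \<Rightarrow> bool" where
  "F_pure p _ \<longleftrightarrow> (\<exists>\<phi>::'a \<Rightarrow> 'a. frob_hom p 1 \<phi> \<and> \<phi> 1 = 1)"

definition I_e :: "nat \<Rightarrow> (nat \<Rightarrow> 'a::comm_ring_1 set) \<Rightarrow> nat \<Rightarrow> 'a set" where
  "I_e p Rg e = {r. \<forall>\<phi>. frob_hom p e \<phi> \<longrightarrow> \<phi> r \<in> max_hom Rg}"

(* b_J(p^e) = max{r : J^r \<not>\<subseteq> I_e(R)}, valued in enat (\<infinity> if unbounded) *)
definition b_J :: "nat \<Rightarrow> (nat \<Rightarrow> 'a::comm_ring_1 set) \<Rightarrow> 'a set \<Rightarrow> nat \<Rightarrow> enat" where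
  "b_J p Rg J e = (SUP r\<in>{r. \<not> ideal_pow J r \<subseteq> I_e p Rg e}. enat r)"

end

theory Submission
  imports Defs
begin

text \<open>If \<open>g \<in> J^r\<close> is not in \<open>I_e\<close>, some \<open>\<phi> : R^(1/p^e) \<rightarrow> R\<close> sends \<open>g\<close> outside \<open>m\<close>.
  Composing \<open>\<phi>\<close> with a splitting \<open>\<psi>\<close> of \<open>R \<rightarrow> R^(1/p)\<close> gives a map \<open>R^(1/p^(e+1)) \<rightarrow> R\<close>
  sending \<open>g^p \<in> J^(pr)\<close> to \<open>\<phi>(\<psi>(g^p)) = \<phi>(g)\<close>, so \<open>g^p \<notin> I_(e+1)\<close>. Thus every \<open>r\<close> with
  \<open>J^r\<close> not contained in \<open>I_e\<close> makes \<open>J^(pr)\<close> not contained in \<open>I_(e+1)\<close>, and the inequality follows by taking suprema.\<close>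

lemma ideal_gen_zero: "0 \<in> ideal_gen S"
  unfolding ideal_gen_def by (intro CollectI exI[of _ "{}"] exI) simp

lemma ideal_gen_base: "s \<in> S \<Longrightarrow> s \<in> ideal_gen S"
  unfolding ideal_gen_def by (auto intro!: exI[of _ "{s}"] exI[of _ "\<lambda>_. 1"])

lemma ideal_gen_mult_left:
  assumes "x \<in> ideal_gen S"
  shows "r * x \<in> ideal_gen S"
proof -
  obtain F c where F: "finite F" "F \<subseteq> S" "x = (\<Sum>s\<in>F. c s * s)"
    using assms unfolding ideal_gen_def by blast
  have "r * x = (\<Sum>s\<in>F. (r * c s) * s)"
    using F(3) by (simp add: sum_distrib_left mult.assoc)
  with F(1,2) show ?thesis
    unfolding ideal_gen_def by (intro CollectI exI[of _ F] exI[of _ "\<lambda>s. r * c s"]) simp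
qed

lemma ideal_gen_add:
  assumes "x \<in> ideal_gen S" "y \<in> ideal_gen S"
  shows "x + y \<in> ideal_gen S"
proof -
  obtain F c G d where F: "finite F" "F \<subseteq> S" "x = (\<Sum>s\<in>F. c s * s)"
    and G: "finite G" "G \<subseteq> S" "y = (\<Sum>s\<in>G. d s * s)"
    using assms unfolding ideal_gen_def by blast
  define c' where "c' s = (if s \<in> F then c s else 0)" for s
  define d' where "d' s = (if s \<in> G then d s else 0)" for s
  have "x = (\<Sum>s\<in>F \<union> G. c' s * s)"
    unfolding F(3) c'_def using F(1) G(1) by (intro sum.mono_neutral_cong_left) auto
  moreover have "y = (\<Sum>s\<in>F \<union> G. d' s * s)"
    unfolding G(3) d'_def using F(1) G(1) by (intro sum.mono_neutral_cong_left) auto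
  ultimately have "x + y = (\<Sum>s\<in>F \<union> G. (c' s + d' s) * s)"
    by (simp add: sum.distrib distrib_right)
  moreover have "finite (F \<union> G)" "F \<union> G \<subseteq> S"
    using F G by auto
  ultimately show ?thesis
    unfolding ideal_gen_def by (intro CollectI exI[of _ "F \<union> G"] exI[of _ "\<lambda>s. c' s + d' s"]) simp
qed

lemma ideal_gen_sum:
  "finite A \<Longrightarrow> (\<And>i. i \<in> A \<Longrightarrow> f i \<in> ideal_gen S) \<Longrightarrow> sum f A \<in> ideal_gen S"
  by (induction A rule: finite_induct) (simp_all add: ideal_gen_zero ideal_gen_add)

lemma ideal_gen_mult:
  assumes "x \<in> ideal_gen S" "y \<in> ideal_gen T"
    and closed: "\<And>s t. s \<in> S \<Longrightarrow> t \<in> T \<Longrightarrow> s * t \<in> U"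
  shows "x * y \<in> ideal_gen U"
proof -
  obtain F c G d where F: "finite F" "F \<subseteq> S" "x = (\<Sum>s\<in>F. c s * s)"
    and G: "finite G" "G \<subseteq> T" "y = (\<Sum>t\<in>G. d t * t)"
    using assms(1,2) unfolding ideal_gen_def by blast
  have "x * y = (\<Sum>s\<in>F. \<Sum>t\<in>G. (c s * d t) * (s * t))"
    unfolding F(3) G(3) sum_product by (intro sum.cong refl) (simp add: algebra_simps)
  also have "\<dots> \<in> ideal_gen U"
  proof (intro ideal_gen_sum F(1) G(1))
    fix s t assume "s \<in> F" "t \<in> G"
    then have "s * t \<in> U"
      using F(2) G(2) closed by blast
    then show "c s * d t * (s * t) \<in> ideal_gen U"
      by (intro ideal_gen_mult_left ideal_gen_base)
  qed
  finally show ?thesis .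
qed

lemma prod_lessThan_add_if:
  fixes f g :: "nat \<Rightarrow> 'a::comm_monoid_mult"
  shows "(\<Prod>i<a + b. if i < a then f i else g (i - a)) = (\<Prod>i<a. f i) * (\<Prod>i<b. g i)"
proof (induction b)
  case 0
  have "(\<Prod>i<a. if i < a then f i else g (i - a)) = (\<Prod>i<a. f i)"
    by (rule prod.cong) auto
  then show ?case by simp
next
  case (Suc b)
  then show ?case by (simp add: mult.assoc)
qed

lemma ideal_pow_generator_mult:
  fixes m n :: nat
  assumes "s \<in> {(\<Prod>i<m. f i) | f. \<forall>i<m. f i \<in> J}" "t \<in> {(\<Prod>i<n. f i) | f. \<forall>i<n. f i \<in> J}"
  shows "s * t \<in> {(\<Prod>i<m + n. f i) | f. \<forall>i<m + n. f i \<in> J}"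
proof -
  obtain f g where f: "s = (\<Prod>i<m. f i)" "\<forall>i<m. f i \<in> J"
    and g: "t = (\<Prod>i<n. g i)" "\<forall>i<n. g i \<in> J"
    using assms by blast
  define h where "h i = (if i < m then f i else g (i - m))" for i
  have "s * t = (\<Prod>i<m + n. h i)"
    unfolding f g h_def by (rule prod_lessThan_add_if[symmetric])
  moreover have "\<forall>i<m + n. h i \<in> J"
    using f g unfolding h_def by auto
  ultimately show ?thesis
    by blast
qed

lemma ideal_pow_mult:
  "x \<in> ideal_pow J a \<Longrightarrow> y \<in> ideal_pow J b \<Longrightarrow> x * y \<in> ideal_pow J (a + b)"
  unfolding ideal_pow_def by (rule ideal_gen_mult, assumption+, rule ideal_pow_generator_mult)

lemma one_in_ideal_pow_0: "1 \<in> ideal_pow J 0"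
  unfolding ideal_pow_def by (rule ideal_gen_base) simp

lemma power_in_ideal_pow: "g \<in> ideal_pow J r \<Longrightarrow> g ^ k \<in> ideal_pow J (k * r)"
  by (induction k) (simp_all add: one_in_ideal_pow_0 ideal_pow_mult)

lemma frob_hom_comp:
  assumes \<phi>: "frob_hom p e \<phi>" and \<psi>: "frob_hom p e' \<psi>"
  shows "frob_hom p (e + e') (\<phi> \<circ> \<psi>)"
proof -
  have "\<psi> (a ^ p ^ (e + e') * x) = a ^ p ^ e * \<psi> x" for a :: 'a and x
    using \<psi> unfolding frob_hom_def by (metis power_add power_mult)
  then show ?thesis
    using \<phi> \<psi> unfolding frob_hom_def by simp
qed

lemma frob_hom_power: "frob_hom p e \<psi> \<Longrightarrow> \<psi> (g ^ p ^ e) = g * \<psi> 1"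
  unfolding frob_hom_def by (metis mult.right_neutral)

lemma power_notin_I_e_Suc:
  assumes "F_pure p TYPE('a::comm_ring_1)" and "(g::'a) \<notin> I_e p Rg e"
  shows "g ^ p \<notin> I_e p Rg (Suc e)"
proof -
  obtain \<psi> :: "'a \<Rightarrow> 'a" where \<psi>: "frob_hom p 1 \<psi>" "\<psi> 1 = 1"
    using assms(1) unfolding F_pure_def by blast
  obtain \<phi> where \<phi>: "frob_hom p e \<phi>" "\<phi> g \<notin> max_hom Rg"
    using assms(2) unfolding I_e_def by blast
  have "(\<phi> \<circ> \<psi>) (g ^ p) = \<phi> g"
    using frob_hom_power[OF \<psi>(1), of g] \<psi>(2) by simp
  with \<phi> frob_hom_comp[OF \<phi>(1) \<psi>(1)] show ?thesis
    unfolding I_e_def by auto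
qed

lemma ideal_pow_not_subset_I_e_Suc:
  assumes "F_pure p TYPE('a::comm_ring_1)" and "\<not> ideal_pow (J::'a set) r \<subseteq> I_e p Rg e"
  shows "\<not> ideal_pow J (p * r) \<subseteq> I_e p Rg (Suc e)"
  using assms power_notin_I_e_Suc power_in_ideal_pow by blast

lemma enat_mult_SUP_le:
  fixes S T :: "nat set"
  assumes "\<And>r. r \<in> S \<Longrightarrow> k * r \<in> T"
  shows "enat k * (SUP r\<in>S. enat r) \<le> (SUP r\<in>T. enat r)"
proof (cases "finite S \<and> S \<noteq> {}")
  case True
  then have "(SUP r\<in>S. enat r) \<in> enat ` S"
    using Max_in[of "enat ` S"] cSup_eq_Max[of "enat ` S"] by simp
  then obtain m where "m \<in> S" "(SUP r\<in>S. enat r) = enat m"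
    by blast
  then show ?thesis
    using assms by (auto intro: SUP_upper)
next
  case False
  show ?thesis
  proof (cases "S = {} \<or> k = 0")
    case True
    then show ?thesis
      by (auto simp: zero_enat_def[symmetric] bot_enat_def)
  next
    case False
    with \<open>\<not> (finite S \<and> S \<noteq> {})\<close> have "infinite ((*) k ` S)" "k > 0"
      by (auto dest: finite_imageD simp: inj_on_def)
    then have "infinite T"
      using assms finite_subset[of "(*) k ` S" T] by blast
    then have "(SUP r\<in>T. enat r) = \<infinity>"
      unfolding Sup_enat_def by (auto dest: finite_imageD simp: inj_on_def)
    then show ?thesis
      by simp
  qed
qed

theorem lemma3p9:
  fixes p :: nat and Rg :: "nat \<Rightarrow> 'a::comm_ring_1 set" and J :: "'a set" and e :: nat
  assumes "prime p"
    and "of_nat p = (0::'a)"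
    and "standard_graded Rg"
    and "F_finite p Rg"
    and "F_pure p TYPE('a)"
    and "homogeneous_ideal Rg J"
  shows "enat p * b_J p Rg J e \<le> b_J p Rg J (Suc e)"
  unfolding b_J_def
  by (rule enat_mult_SUP_le) (simp add: ideal_pow_not_subset_I_e_Suc[OF assms(5)])

end
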